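(* Let $q$ be a prime power, $n$ a positive integer with $\gcd(q,n)=1$, $s\in\mathbb{Z}_n^*$, $t\in\mathbb{Z}_n$ with $qt\equiv t\pmod n$, $s^{-1}$ a positive integer with $ss^{-1}\equiv1\pmod n$, and $P\subseteq\mathbb{Z}_n$ a $\mu_q$-invariant subset. Then $$f_{\rho_{s,t}(P)}(X)=\gcd\big(f_P(\theta^{-t}X^{s^{-1}}),\,X^n-1\big)=\gcd\big(\varphi_{s,t}(f_P(X)),\,X^n-1\big),$$ where $\gcd$ denotes the monic greatest common divisor in $\mathbb{F}_q[X]$.
   Context: Fix a primitive $n$-th root of unity $\theta$ in an extension of $\mathbb{F}_q$. $\mu_q:\mathbb{Z}_n\to\mathbb{Z}_n$, $i\mapsto qi\bmod n$; $P$ is $\mu_q$-invariant if $\mu_q(P)=P$. For such $P$, $f_P(X)=\prod_{i\in P}(X-\theta^i)\in\mathbb{F}_q[X]$. $\rho_{s,t}:\mathbb{Z}_n\to\mathbb{Z}_n$, $i\mapsto s(i+t)\bmod n$. $\varphi_{s,t}(a(X))$ is the unique polynomial of degree $<n$ congruent to $a(\theta^{-t}X^{s^{-1}})$ modulo $X^n-1$ (note $\theta^{-t}\in\mathbb{F}_q$). *)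

theory Defs
  imports "HOL-Computational_Algebra.Polynomial" "HOL-Computational_Algebra.Polynomial_Factorial"
    "HOL-Number_Theory.Cong"
begin

text \<open>The base field F_q is a finite field type 'k (q = CARD('k)); the extension field
  containing theta is a field type 'e, related to 'k by a ring embedding emb.  A polynomial over 'e with all coefficients
  in the image of emb is pulled back to 'k poly.\<close>

definition pullback_poly :: "('k::field \<Rightarrow> 'e::field) \<Rightarrow> 'e poly \<Rightarrow> 'k poly" where
  "pullback_poly emb p = (THE g. map_poly emb g = p)"

definition pullback_elem :: "('k::field \<Rightarrow> 'e::field) \<Rightarrow> 'e \<Rightarrow> 'k" where
  "pullback_elem emb x = (THE c. emb c = x)"

definition mu :: "nat \<Rightarrow> nat \<Rightarrow> nat \<Rightarrow> nat" where
  "mu q n i = (q * i) mod n"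

definition mu_invariant :: "nat \<Rightarrow> nat \<Rightarrow> nat set \<Rightarrow> bool" where
  "mu_invariant q n P \<longleftrightarrow> P \<subseteq> {..<n} \<and> mu q n ` P = P"

definition rho :: "nat \<Rightarrow> nat \<Rightarrow> nat \<Rightarrow> nat \<Rightarrow> nat" where
  "rho n s t i = (s * (i + t)) mod n"

definition fP :: "('k::field \<Rightarrow> 'e::field) \<Rightarrow> 'e \<Rightarrow> nat set \<Rightarrow> 'k poly" where
  "fP emb \<theta> P = pullback_poly emb (\<Prod>i\<in>P. [:- (\<theta> ^ i), 1:])"

definition subst_poly :: "('k::field \<Rightarrow> 'e::field) \<Rightarrow> 'e \<Rightarrow> nat \<Rightarrow> nat \<Rightarrow> 'k poly \<Rightarrow> 'k poly" where
  "subst_poly emb \<theta> t sinv a = pcompose a (monom (pullback_elem emb (inverse \<theta> ^ t)) sinv)"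

text \<open>varphi_{s,t}(a): the unique polynomial of degree < n congruent to
  a(theta^{-t} X^{s^{-1}}) modulo X^n - 1, i.e. the remainder.\<close>
definition varphi :: "('k::field \<Rightarrow> 'e::field) \<Rightarrow> 'e \<Rightarrow> nat \<Rightarrow> nat \<Rightarrow> nat \<Rightarrow> 'k poly \<Rightarrow> 'k poly" where
  "varphi emb \<theta> n t sinv a = subst_poly emb \<theta> t sinv a mod (monom 1 n - 1)"

end

theory Submission
  imports Defs "Berlekamp_Zassenhaus.Finite_Field"
begin

text \<open>Over the extension, \<open>f_P\<close> is the product of the linear factors \<open>X - \<theta>^i\<close>, \<open>i \<in> P\<close>;
  \<open>\<mu>_q\<close>-invariance of \<open>P\<close> is exactly what makes this product fixed by the Frobenius \<open>c \<mapsto> c^q\<close>,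
  i.e. defined over \<open>F_q\<close>. Since \<open>X^n - 1\<close> splits into the distinct factors \<open>X - \<theta>^j\<close>, \<open>j < n\<close>,
  a monic divisor of it is the product of the factors at its roots, and the roots \<open>\<theta>^j\<close> of
  \<open>gcd (f_P(\<theta>^-t X^(s^-1)), X^n - 1)\<close> are those of \<open>f_P(\<theta>^-t X^(s^-1))\<close>, i.e. those with
  \<open>\<theta>^(j s^-1) = \<theta>^(i + t)\<close> for some \<open>i \<in> P\<close>, which means \<open>j = s (i + t) mod n\<close>, \<open>j \<in> \<rho>_{s,t}(P)\<close>.
  Reducing modulo \<open>X^n - 1\<close> does not change the gcd.\<close>

text \<open>The import brings HOL-Algebra's constants of the same names into scope.\<close>

hide_const (open) up_ring.coeff up_ring.monom module.smult

section \<open>Finite fields\<close>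

text \<open>The library's \<open>finite_field_power_card_eq_same\<close> needs the sort \<open>finite_field\<close>,
  which a type variable of sort \<open>{field, finite}\<close> cannot be given.\<close>

lemma finite_field_power_card_eq:
  fixes x :: "'k::{field,finite}"
  shows "x ^ CARD('k) = x"
proof (cases "x = 0")
  case False
  have "(\<Prod>y\<in>UNIV-{0}. x * y) = (\<Prod>y\<in>UNIV-{0}. y)"
    by (rule prod.reindex_bij_witness[of _ "\<lambda>y. y / x" "\<lambda>y. x * y"]) (use False in auto)
  then have "x ^ (CARD('k) - 1) * \<Prod>(UNIV-{0}) = 1 * \<Prod>(UNIV-{0})"
    by (simp add: prod.distrib card_Diff_subset)
  then have "x ^ (CARD('k) - 1) = 1"
    by (subst (asm) mult_right_cancel) auto
  then have "x * x ^ (CARD('k) - 1) = x" by simp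
  then show ?thesis
    by (simp flip: power_Suc add: finite_UNIV_card_ge_0 Suc_pred)
qed (simp add: finite_UNIV_card_ge_0)

text \<open>The polynomial \<open>(X + 1)^q - X^q - 1\<close> has degree below \<open>q\<close> but vanishes at all \<open>q\<close> points.\<close>

lemma finite_field_card_choose_eq_0:
  assumes "0 < j" "j < CARD('k::{field,finite})"
  shows "of_nat (CARD('k) choose j) = (0::'k)"
proof -
  define q where "q = CARD('k)"
  define p :: "'k poly" where "p = [:1, 1:] ^ q - monom 1 q - 1"
  have "0 < q"
    by (simp add: q_def finite_UNIV_card_ge_0)
  have coeff_p: "coeff p i = (if 0 < i \<and> i < q then of_nat (q choose i) else 0)" for i
    by (cases "i \<le> q")
       (auto simp: p_def coeff_linear_poly_power coeff_monom coeff_1 coeff_eq_0 degree_linear_power \<open>0 < q\<close>)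
  have "degree p < q"
  proof -
    have "degree p \<le> q - 1"
      by (rule degree_le) (auto simp: coeff_p)
    then show ?thesis
      using \<open>0 < q\<close> by simp
  qed
  moreover have "poly p x = 0" for x
    using finite_field_power_card_eq[of x] finite_field_power_card_eq[of "1 + x"]
    by (simp add: p_def poly_monom q_def)
  ultimately have "p = 0"
    using card_poly_roots_bound[of p] by (fastforce simp: q_def)
  then show ?thesis
    using coeff_p[of j] assms by (simp add: q_def)
qed

lemma add_power_eq_if_choose_eq_0:
  fixes x y :: "'a::comm_semiring_1"
  assumes "\<And>j. 0 < j \<Longrightarrow> j < q \<Longrightarrow> of_nat (q choose j) = (0::'a)" and "0 < q"
  shows "(x + y) ^ q = x ^ q + y ^ q"
proof -
  have "(x + y) ^ q = (\<Sum>k\<le>q. of_nat (q choose k) * x ^ k * y ^ (q - k))"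
    by (rule binomial_ring)
  also have "\<dots> = (\<Sum>k\<in>{0, q}. of_nat (q choose k) * x ^ k * y ^ (q - k))"
    by (rule sum.mono_neutral_right) (auto simp: assms(1))
  finally show ?thesis
    using \<open>0 < q\<close> by (simp add: add.commute)
qed

section \<open>Primitive roots of unity\<close>

definition primitive_root :: "nat \<Rightarrow> 'a::monoid_mult \<Rightarrow> bool" where
  "primitive_root n \<theta> \<longleftrightarrow> 0 < n \<and> \<theta> ^ n = 1 \<and> (\<forall>k. 0 < k \<and> k < n \<longrightarrow> \<theta> ^ k \<noteq> 1)"

lemma primitive_root_nonzero:
  "primitive_root n \<theta> \<Longrightarrow> \<theta> \<noteq> (0::'a::semiring_1)"
  by (auto simp: primitive_root_def power_0_left)

lemma power_mod_eq_power:
  fixes \<theta> :: "'a::monoid_mult"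
  assumes "\<theta> ^ n = 1"
  shows "\<theta> ^ (m mod n) = \<theta> ^ m"
  by (metis assms div_mult_mod_eq mult.commute power_add power_mult power_one mult_1)

lemma primitive_root_power_eq_iff:
  fixes \<theta> :: "'a::idom"
  assumes "primitive_root n \<theta>"
  shows "\<theta> ^ a = \<theta> ^ b \<longleftrightarrow> [a = b] (mod n)"
proof -
  from assms have "0 < n" and "\<theta> ^ n = 1" and no_smaller: "\<And>k. 0 < k \<Longrightarrow> k < n \<Longrightarrow> \<theta> ^ k \<noteq> 1"
    unfolding primitive_root_def by auto
  have "\<theta> \<noteq> 0"
    using assms by (rule primitive_root_nonzero)
  have eq: "i = j" if "i \<le> j" "j < n" "\<theta> ^ i = \<theta> ^ j" for i j
  proof -
    have "\<theta> ^ i * \<theta> ^ (j - i) = \<theta> ^ i * 1"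
      using that by (metis power_add le_add_diff_inverse mult_1_right)
    then have "\<theta> ^ (j - i) = 1"
      using \<open>\<theta> \<noteq> 0\<close> by simp
    then show "i = j"
      using no_smaller[of "j - i"] that by linarith
  qed
  have "\<theta> ^ a = \<theta> ^ b \<longleftrightarrow> \<theta> ^ (a mod n) = \<theta> ^ (b mod n)"
    by (simp add: power_mod_eq_power \<open>\<theta> ^ n = 1\<close>)
  also have "\<dots> \<longleftrightarrow> a mod n = b mod n"
    using eq[of "a mod n" "b mod n"] eq[of "b mod n" "a mod n"] \<open>0 < n\<close>
    by (metis nat_le_linear mod_less_divisor)
  finally show ?thesis
    unfolding cong_def .
qed

lemma primitive_root_inj_on_power:
  "primitive_root n \<theta> \<Longrightarrow> inj_on (\<lambda>j. \<theta> ^ j) {..<n}"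
  for \<theta> :: "'a::idom"
  using primitive_root_power_eq_iff by (fastforce intro: inj_onI simp: cong_def)

section \<open>Products of distinct linear factors\<close>

lemma degree_prod_linear_factors:
  fixes a :: "'b \<Rightarrow> 'a::idom"
  shows "finite J \<Longrightarrow> degree (\<Prod>j\<in>J. [:- a j, 1:]) = card J"
  by (simp add: degree_prod_eq_sum_degree)

lemma prod_linear_factors_dvd:
  fixes a :: "'b \<Rightarrow> 'a::idom"
  assumes "finite J" "inj_on a J" "\<And>j. j \<in> J \<Longrightarrow> poly p (a j) = 0"
  shows "(\<Prod>j\<in>J. [:- a j, 1:]) dvd p"
  using assms
proof (induction J arbitrary: p rule: finite_induct)
  case (insert x J)
  obtain r where p: "p = [:- a x, 1:] * r"
    using insert.prems(2) poly_eq_0_iff_dvd by blast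
  have "poly r (a j) = 0" if "j \<in> J" for j
    using insert that p by (auto simp: inj_on_def)
  then have "(\<Prod>j\<in>J. [:- a j, 1:]) dvd r"
    using insert by auto
  then show ?case
    unfolding p prod.insert[OF insert.hyps] by (rule mult_dvd_mono[OF dvd_refl])
qed simp

lemma prod_linear_factors_eq:
  fixes a :: "'b \<Rightarrow> 'a::idom"
  assumes "finite J" "inj_on a J" "\<And>j. j \<in> J \<Longrightarrow> poly p (a j) = 0"
    and "degree p = card J" "lead_coeff p = 1"
  shows "p = (\<Prod>j\<in>J. [:- a j, 1:])"
proof -
  obtain r where p: "p = (\<Prod>j\<in>J. [:- a j, 1:]) * r"
    using prod_linear_factors_dvd[OF assms(1-3)] by blast
  have "lead_coeff p = lead_coeff r"
    by (simp add: p lead_coeff_mult lead_coeff_prod)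
  with assms(5) have "r \<noteq> 0" "lead_coeff r = 1"
    by auto
  moreover from \<open>r \<noteq> 0\<close> have "degree r = 0"
    using assms(1,4) by (simp add: p degree_mult_eq degree_prod_linear_factors)
  ultimately have "r = 1"
    by (metis degree_0_id one_pCons)
  then show ?thesis
    using p by simp
qed

lemma dvd_prod_linear_factors_eq:
  fixes a :: "'b \<Rightarrow> 'a::idom"
  assumes "finite J" "inj_on a J" "G dvd (\<Prod>j\<in>J. [:- a j, 1:])"
  shows "G = smult (lead_coeff G) (\<Prod>j\<in>{j\<in>J. poly G (a j) = 0}. [:- a j, 1:])"
proof -
  define L where "L A = (\<Prod>j\<in>A. [:- a j, 1:])" for A
  define R where "R = {j\<in>J. poly G (a j) = 0}"
  have "R \<subseteq> J" "finite R" "finite (J - R)"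
    using assms(1) by (auto simp: R_def)
  have "L R dvd G"
    unfolding L_def using \<open>finite R\<close> inj_on_subset[OF assms(2) \<open>R \<subseteq> J\<close>]
    by (intro prod_linear_factors_dvd) (auto simp: R_def)
  then obtain h where G: "G = L R * h" ..
  obtain w where w: "L J = G * w"
    using assms(3) unfolding L_def ..
  have "L R * L (J - R) = G * w"
    unfolding w[symmetric] L_def prod.subset_diff[OF \<open>R \<subseteq> J\<close> assms(1)] by (simp only: mult.commute)
  also have "\<dots> = L R * (h * w)"
    by (simp add: G mult.assoc)
  finally have rest: "L (J - R) = h * w"
    by (simp add: L_def \<open>finite R\<close>)
  have "poly w (a j) = 0" if "j \<in> J - R" for j
  proof -
    have "poly (L (J - R)) (a j) = 0"
      using that \<open>finite (J - R)\<close> by (auto simp: L_def poly_prod)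
    moreover have "poly G (a j) \<noteq> 0"
      using that by (auto simp: R_def)
    ultimately show ?thesis
      by (metis G rest poly_mult mult_eq_0_iff)
  qed
  txt \<open>The cofactor \<open>w\<close> absorbs every factor missing from \<open>G\<close>, so \<open>h\<close> has degree \<open>0\<close>.\<close>
  then have "L (J - R) dvd w"
    unfolding L_def using \<open>finite (J - R)\<close> inj_on_subset[OF assms(2)]
    by (intro prod_linear_factors_dvd) auto
  moreover have "L (J - R) \<noteq> 0"
    by (simp add: L_def \<open>finite (J - R)\<close>)
  ultimately have "degree (L (J - R)) \<le> degree w" "h \<noteq> 0" "w \<noteq> 0"
    using rest by (auto intro: dvd_imp_degree_le)
  with rest have "degree h = 0"
    by (simp add: degree_mult_eq)
  then obtain c where "h = [:c:]"
    by (rule degree_eq_zeroE)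
  moreover have "lead_coeff (L R) = 1"
    by (simp add: L_def lead_coeff_prod)
  ultimately have "G = smult (lead_coeff G) (L R)"
    by (simp add: G lead_coeff_mult)
  then show ?thesis
    by (simp only: L_def R_def)
qed

lemma monom_one_minus_one_nonzero:
  "0 < n \<Longrightarrow> monom 1 n - 1 \<noteq> (0::'a::comm_ring_1 poly)"
  by (auto dest: arg_cong[of _ _ "\<lambda>p. coeff p n"] simp: coeff_monom)

lemma monom_one_minus_one_eq_prod:
  fixes \<theta> :: "'a::idom"
  assumes "primitive_root n \<theta>"
  shows "monom 1 n - 1 = (\<Prod>j<n. [:- (\<theta> ^ j), 1:])"
proof (rule prod_linear_factors_eq)
  show "inj_on (\<lambda>j. \<theta> ^ j) {..<n}"
    using assms by (rule primitive_root_inj_on_power)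
  have "(\<theta> ^ j) ^ n = 1" for j
    using assms unfolding primitive_root_def by (metis power_mult_distrib power_one mult.commute power_mult)
  then show "poly (monom 1 n - 1) (\<theta> ^ j) = 0" for j
    by (simp add: poly_monom)
  have "0 < n"
    using assms by (simp add: primitive_root_def)
  then have lead: "coeff (monom 1 n - 1) n = (1::'a)"
    by (simp add: coeff_monom)
  moreover have "degree (monom 1 n - 1 :: 'a poly) \<le> n"
    by (rule degree_diff_le) (simp_all add: degree_monom_le)
  ultimately show degree: "degree (monom 1 n - 1 :: 'a poly) = card {..<n}"
    by (simp add: le_antisym le_degree)
  show "lead_coeff (monom 1 n - 1) = (1::'a)"
    using lead by (simp add: degree)
qed simp

lemma map_poly_gcd_eq_prod_common_roots:
  fixes emb :: "'k::field_gcd \<Rightarrow> 'e::field" and a :: "'b \<Rightarrow> 'e"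
  assumes "field_hom emb" "finite J" "inj_on a J"
    and N: "map_poly emb N = (\<Prod>j\<in>J. [:- a j, 1:])"
  shows "map_poly emb (gcd S N) = (\<Prod>j\<in>{j\<in>J. poly (map_poly emb S) (a j) = 0}. [:- a j, 1:])"
proof -
  interpret field_hom emb
    by fact
  interpret map_poly_hom: map_poly_idom_hom emb ..
  let ?E = "map_poly emb"
  have "N \<noteq> 0"
    using N assms(2) by auto
  then have monic: "lead_coeff (?E (gcd S N)) = 1"
    using poly_gcd_monic[of S N] by simp
  have "?E (gcd S N) dvd (\<Prod>j\<in>J. [:- a j, 1:])"
    unfolding N[symmetric] by (rule map_poly_hom.hom_dvd) simp
  from dvd_prod_linear_factors_eq[OF assms(2,3) this]
  have "?E (gcd S N) = (\<Prod>j\<in>{j\<in>J. poly (?E (gcd S N)) (a j) = 0}. [:- a j, 1:])"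
    unfolding monic smult_1_left .
  also have "{j\<in>J. poly (?E (gcd S N)) (a j) = 0} = {j\<in>J. poly (?E S) (a j) = 0}"
  proof -
    have "poly (?E (gcd S N)) (a j) = 0 \<longleftrightarrow> poly (?E S) (a j) = 0" if "j \<in> J" for j
    proof
      have "?E (gcd S N) dvd ?E S"
        by (rule map_poly_hom.hom_dvd) simp
      then obtain r where "?E S = ?E (gcd S N) * r" ..
      then show "poly (?E (gcd S N)) (a j) = 0 \<Longrightarrow> poly (?E S) (a j) = 0"
        by simp
    next
      have "poly (?E N) (a j) = 0"
        using that assms(2) by (fastforce simp: N poly_prod)
      then show "poly (?E S) (a j) = 0 \<Longrightarrow> poly (?E (gcd S N)) (a j) = 0"
        unfolding bezout_coefficients_fst_snd[of S N, symmetric]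
        by (simp del: bezout_coefficients_fst_snd add: map_poly_hom.hom_add map_poly_hom.hom_mult)
    qed
    then show ?thesis
      by blast
  qed
  finally show ?thesis .
qed

section \<open>The maps \<open>\<mu>_q\<close> and \<open>\<rho>_{s,t}\<close>\<close>

lemma mu_rho_commute:
  assumes "[q * t = t] (mod n)"
  shows "mu q n (rho n s t i) = rho n s t (mu q n i)"
proof -
  have "mu q n (rho n s t i) = q * (s * (i + t)) mod n"
    by (simp add: mu_def rho_def mod_mult_right_eq)
  also have "\<dots> = s * (q * i + t) mod n"
  proof -
    have "[s * (q * i) + s * (q * t) = s * (q * i) + s * t] (mod n)"
      using assms by (intro cong_add cong_scalar_left) auto
    then show ?thesis
      unfolding cong_def by (simp add: algebra_simps)
  qed
  also have "\<dots> = rho n s t (mu q n i)"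
    unfolding mu_def rho_def by (metis mod_add_left_eq mod_mult_right_eq)
  finally show ?thesis .
qed

lemma mu_invariant_rho_image:
  assumes "mu_invariant q n P" "[q * t = t] (mod n)" "0 < n"
  shows "mu_invariant q n (rho n s t ` P)"
proof -
  have "mu q n ` rho n s t ` P = rho n s t ` mu q n ` P"
    unfolding image_image mu_rho_commute[OF assms(2)] ..
  then show ?thesis
    using assms(1,3) by (auto simp: mu_invariant_def rho_def)
qed

lemma rho_image_iff:
  assumes "[s * sinv = 1] (mod n)" and "j < n"
  shows "j \<in> rho n s t ` P \<longleftrightarrow> (\<exists>i\<in>P. [j * sinv = i + t] (mod n))"
proof
  assume "j \<in> rho n s t ` P"
  then obtain i where "i \<in> P" and "[j = s * (i + t)] (mod n)"
    by (auto simp: rho_def cong_def)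
  then have "[j * sinv = (s * sinv) * (i + t)] (mod n)"
    by (metis cong_scalar_right mult.commute mult.left_commute)
  also have "[(s * sinv) * (i + t) = i + t] (mod n)"
    using assms(1) by (metis cong_scalar_right mult_1)
  finally show "\<exists>i\<in>P. [j * sinv = i + t] (mod n)"
    using \<open>i \<in> P\<close> by blast
next
  assume "\<exists>i\<in>P. [j * sinv = i + t] (mod n)"
  then obtain i where "i \<in> P" and i: "[j * sinv = i + t] (mod n)" ..
  have "[j = j * (s * sinv)] (mod n)"
    using assms(1) by (metis cong_scalar_left cong_sym mult_1_right)
  also have "[j * (s * sinv) = s * (i + t)] (mod n)"
    using i by (metis cong_scalar_left mult.commute mult.left_commute)
  finally have "j = rho n s t i"
    using assms(2) by (simp add: rho_def cong_def)
  then show "j \<in> rho n s t ` P"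
    using \<open>i \<in> P\<close> by blast
qed

lemma poly_pcompose_prod_eq_0_iff:
  fixes \<theta> :: "'a::field"
  assumes "primitive_root n \<theta>" "finite P" "[s * sinv = 1] (mod n)" "j < n"
  shows "poly (pcompose (\<Prod>i\<in>P. [:- (\<theta> ^ i), 1:]) (monom (inverse \<theta> ^ t) sinv)) (\<theta> ^ j) = 0
    \<longleftrightarrow> j \<in> rho n s t ` P"
proof -
  have "\<theta> \<noteq> 0"
    using assms(1) by (rule primitive_root_nonzero)
  have "poly (pcompose (\<Prod>i\<in>P. [:- (\<theta> ^ i), 1:]) (monom (inverse \<theta> ^ t) sinv)) (\<theta> ^ j) = 0
      \<longleftrightarrow> (\<exists>i\<in>P. inverse \<theta> ^ t * \<theta> ^ (j * sinv) = \<theta> ^ i)"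
    using assms(2) by (simp add: poly_pcompose poly_prod poly_monom power_mult)
  also have "\<dots> \<longleftrightarrow> (\<exists>i\<in>P. \<theta> ^ (j * sinv) = \<theta> ^ (i + t))"
  proof -
    have "inverse \<theta> ^ t * \<theta> ^ (j * sinv) = \<theta> ^ i \<longleftrightarrow> \<theta> ^ (j * sinv) = \<theta> ^ (i + t)" for i
      using \<open>\<theta> \<noteq> 0\<close> by (simp add: power_add power_inverse field_simps)
    then show ?thesis
      by simp
  qed
  also have "\<dots> \<longleftrightarrow> (\<exists>i\<in>P. [j * sinv = i + t] (mod n))"
    using primitive_root_power_eq_iff[OF assms(1)] by simp
  also have "\<dots> \<longleftrightarrow> j \<in> rho n s t ` P"
    using rho_image_iff[OF assms(3,4)] by simp
  finally show ?thesis .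
qed

section \<open>Polynomials over \<open>F_q\<close> inside an extension\<close>

locale finite_field_extension = field_hom emb for emb :: "'k::{field,finite} \<Rightarrow> 'e::field"
begin

sublocale map_poly_hom: map_poly_inj_idom_hom emb ..

lemma frobenius_field_hom: "field_hom (\<lambda>x::'e. x ^ CARD('k))"
proof -
  have "0 < CARD('k)"
    by (simp add: finite_UNIV_card_ge_0)
  moreover have "of_nat (CARD('k) choose j) = (0::'e)" if "0 < j" "j < CARD('k)" for j
    using finite_field_card_choose_eq_0[OF that] hom_of_nat by (metis hom_zero)
  ultimately show ?thesis
    by unfold_locales (simp_all add: add_power_eq_if_choose_eq_0 power_mult_distrib)
qed

lemma power_card_emb [simp]: "emb c ^ CARD('k) = emb c"
  by (metis hom_power finite_field_power_card_eq)

text \<open>The \<open>q\<close> elements of \<open>range emb\<close> already exhaust the at most \<open>q\<close> roots of \<open>X^q - X\<close>.\<close>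

lemma power_card_eq_iff_in_range: "c ^ CARD('k) = c \<longleftrightarrow> c \<in> range emb"
proof
  define T :: "'e poly" where "T = monom 1 CARD('k) - [:0, 1:]"
  have "1 < CARD('k)"
    using card_mono[of UNIV "{0, 1::'k}"] by simp
  then have "coeff T CARD('k) = 1"
    by (simp add: T_def coeff_pCons split: nat.split)
  then have "T \<noteq> 0"
    by auto
  have "degree T \<le> CARD('k)"
    using \<open>1 < CARD('k)\<close> by (auto simp: T_def intro!: degree_diff_le degree_monom_le)
  with \<open>T \<noteq> 0\<close> have "card {x. poly T x = 0} \<le> CARD('k)"
    using card_poly_roots_bound le_trans by blast
  moreover have "range emb \<subseteq> {x. poly T x = 0}"
    by (auto simp: T_def poly_monom)
  moreover have "card (range emb) = CARD('k)"
    by (simp add: card_image inj_f)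
  ultimately have "range emb = {x. poly T x = 0}"
    using card_subset_eq poly_roots_finite[OF \<open>T \<noteq> 0\<close>] by (metis order_antisym card_mono)
  then show "c ^ CARD('k) = c \<Longrightarrow> c \<in> range emb"
    by (simp add: T_def poly_monom)
qed auto

lemma pullback_elem_emb [simp]: "pullback_elem emb (emb c) = c"
  unfolding pullback_elem_def by auto

lemma map_poly_pullback_poly:
  assumes "\<And>i. coeff G i \<in> range emb"
  shows "map_poly emb (pullback_poly emb G) = G"
proof -
  define g where "g = map_poly (pullback_elem emb) G"
  have "map_poly emb g = G"
  proof (rule poly_eqI)
    fix i
    obtain c where "coeff G i = emb c"
      using assms[of i] by blast
    then show "coeff (map_poly emb g) i = coeff G i"
      using pullback_elem_emb[of 0] by (simp add: g_def coeff_map_poly)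
  qed
  moreover from this have "pullback_poly emb G = g"
    unfolding pullback_poly_def by (auto intro!: the_equality)
  ultimately show ?thesis
    by simp
qed

text \<open>Invariance under \<open>\<mu>_q\<close> makes the product fixed by the Frobenius, so its coefficients lie
  in the image of \<open>F_q\<close>.\<close>

lemma map_poly_fP:
  assumes "\<theta> ^ n = 1" and "mu_invariant CARD('k) n Q"
  shows "map_poly emb (fP emb \<theta> Q) = (\<Prod>i\<in>Q. [:- (\<theta> ^ i), 1:])"
proof -
  define G where "G = (\<Prod>i\<in>Q. [:- (\<theta> ^ i), 1:])"
  interpret frobenius: field_hom "\<lambda>x::'e. x ^ CARD('k)"
    by (rule frobenius_field_hom)
  interpret map_frobenius: map_poly_idom_hom "\<lambda>x::'e. x ^ CARD('k)" ..
  from assms(2) have "finite Q" and mu_Q: "mu CARD('k) n ` Q = Q"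
    unfolding mu_invariant_def by (auto intro: finite_subset)
  then have "inj_on (mu CARD('k) n) Q"
    by (simp add: eq_card_imp_inj_on)
  have "map_poly (\<lambda>x. x ^ CARD('k)) G = (\<Prod>i\<in>Q. [:- (\<theta> ^ mu CARD('k) n i), 1:])"
    by (simp add: G_def map_frobenius.hom_prod frobenius.hom_uminus mu_def mult.commute
        power_mod_eq_power[OF assms(1)] flip: power_mult)
  also have "\<dots> = G"
    unfolding G_def using prod.reindex[OF \<open>inj_on (mu CARD('k) n) Q\<close>, of "\<lambda>i. [:- (\<theta> ^ i), 1:]"] mu_Q
    by (simp add: comp_def)
  finally have "coeff G i ^ CARD('k) = coeff G i" for i
    by (metis frobenius.coeff_map_poly_hom)
  then have "map_poly emb (pullback_poly emb G) = G"
    by (simp add: map_poly_pullback_poly power_card_eq_iff_in_range)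
  then show ?thesis
    by (simp add: fP_def G_def)
qed

end

lemma fP_rho_image_eq_gcd:
  fixes emb :: "'k::{field_gcd,finite} \<Rightarrow> 'e::field"
  assumes emb: "finite_field_extension emb" and \<theta>: "primitive_root n \<theta>"
    and P: "mu_invariant CARD('k) n P"
    and t: "[CARD('k) * t = t] (mod n)" and sinv: "[s * sinv = 1] (mod n)"
  shows "fP emb \<theta> (rho n s t ` P) = gcd (subst_poly emb \<theta> t sinv (fP emb \<theta> P)) (monom 1 n - 1)"
proof -
  interpret finite_field_extension emb
    by (fact emb)
  define S where "S = subst_poly emb \<theta> t sinv (fP emb \<theta> P)"
  define N :: "'k poly" where "N = monom 1 n - 1"
  have "0 < n" "\<theta> ^ n = 1"
    using \<theta> by (auto simp: primitive_root_def)
  have "(inverse \<theta> ^ t) ^ CARD('k) = inverse \<theta> ^ t"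
    using t primitive_root_power_eq_iff[OF \<theta>]
    by (simp add: power_inverse mult.commute flip: power_mult)
  then obtain c where c: "emb c = inverse \<theta> ^ t"
    using power_card_eq_iff_in_range by auto
  have ES: "map_poly emb S = pcompose (\<Prod>i\<in>P. [:- (\<theta> ^ i), 1:]) (monom (inverse \<theta> ^ t) sinv)"
    using P \<open>\<theta> ^ n = 1\<close> by (simp add: S_def subst_poly_def map_poly_pcompose map_poly_fP flip: c)
  have EN: "map_poly emb N = (\<Prod>j<n. [:- (\<theta> ^ j), 1:])"
    using \<theta> by (simp add: N_def hom_distribs monom_one_minus_one_eq_prod)
  have "{j\<in>{..<n}. poly (map_poly emb S) (\<theta> ^ j) = 0} = rho n s t ` P"
  proof -
    have "finite P"
      using P by (auto simp: mu_invariant_def intro: finite_subset)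
    then have "poly (map_poly emb S) (\<theta> ^ j) = 0 \<longleftrightarrow> j \<in> rho n s t ` P" if "j < n" for j
      unfolding ES by (rule poly_pcompose_prod_eq_0_iff[OF \<theta> _ sinv that])
    moreover have "rho n s t ` P \<subseteq> {..<n}"
      using \<open>0 < n\<close> by (auto simp: rho_def)
    ultimately show ?thesis
      by auto
  qed
  then have "map_poly emb (gcd S N) = (\<Prod>j\<in>rho n s t ` P. [:- (\<theta> ^ j), 1:])"
    using map_poly_gcd_eq_prod_common_roots[OF field_hom_axioms finite_lessThan
        primitive_root_inj_on_power[OF \<theta>] EN]
    by simp
  also have "\<dots> = map_poly emb (fP emb \<theta> (rho n s t ` P))"
    using mu_invariant_rho_image[OF P t \<open>0 < n\<close>] \<open>\<theta> ^ n = 1\<close> by (simp add: map_poly_fP)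
  finally show ?thesis
    by (simp add: S_def N_def)
qed

theorem theorem2p8:
  fixes emb :: "'k::{field_gcd,finite} \<Rightarrow> 'e::field"
    and \<theta> :: 'e and q n s t sinv :: nat and P :: "nat set"
  assumes q_def: "q = card (UNIV :: 'k set)"
    and emb_one: "emb 1 = 1"
    and emb_add: "\<And>x y. emb (x + y) = emb x + emb y"
    and emb_mult: "\<And>x y. emb (x * y) = emb x * emb y"
    and n_pos: "n > 0"
    and coprime_qn: "coprime q n"
    and prim: "\<theta> ^ n = 1" "\<And>k. 0 < k \<Longrightarrow> k < n \<Longrightarrow> \<theta> ^ k \<noteq> 1"
    and s: "s < n" "coprime s n"
    and t: "t < n" "[q * t = t] (mod n)"
    and sinv: "sinv > 0" "[s * sinv = 1] (mod n)"
    and P: "mu_invariant q n P"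
  shows "fP emb \<theta> (rho n s t ` P) = gcd (subst_poly emb \<theta> t sinv (fP emb \<theta> P)) (monom 1 n - 1)
       \<and> gcd (subst_poly emb \<theta> t sinv (fP emb \<theta> P)) (monom 1 n - 1)
         = gcd (varphi emb \<theta> n t sinv (fP emb \<theta> P)) (monom 1 n - 1)"
proof
  have "finite_field_extension emb"
  proof
    show "emb 0 = 0"
      using emb_add[of 0 0] by (metis add_0 add_cancel_right_right)
  qed (fact emb_one emb_add emb_mult)+
  moreover have "primitive_root n \<theta>"
    using n_pos prim by (simp add: primitive_root_def)
  ultimately show "fP emb \<theta> (rho n s t ` P) = gcd (subst_poly emb \<theta> t sinv (fP emb \<theta> P)) (monom 1 n - 1)"
    using fP_rho_image_eq_gcd P t(2) sinv(2) q_def by blast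
  show "gcd (subst_poly emb \<theta> t sinv (fP emb \<theta> P)) (monom 1 n - 1)
      = gcd (varphi emb \<theta> n t sinv (fP emb \<theta> P)) (monom 1 n - 1)"
    unfolding varphi_def by (rule gcd_mod_left[OF monom_one_minus_one_nonzero[OF n_pos], symmetric])
qed

end
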